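(* For $\mu=\sum_{i\in I}f_is_if_i$ and $\nu=\sum_{j\in J}g_jt_jg_j$ in $P(G,C(X))$, define $\mu\nu:=\sum_{i\in I}\sum_{j\in J}\big(f_i(s_i\cdot g_j)\big)(s_it_j)\big((s_i\cdot g_j)f_i\big)$. Then $\sum_{(i,j)\in I\times J}\big(f_i(s_i\cdot g_j)\big)^2=1$ as a norm-convergent unordered sum, so $\mu\nu\in P(G,C(X))$ (after discarding zero terms); this multiplication is associative, making $P(G,C(X))$ a semigroup, and $P_f(G,C(X))$ is a subsemigroup.
   Context: $G$ is a countable discrete group acting on a compact Hausdorff space $X$ by homeomorphisms, with $(g\cdot f)(x)=f(g^{-1}x)$ on $C(X)$. A generalized $(G,C(X))$-probability measure is a formal sum $\mu=\sum_{i\in I}f_is_if_i$ with $I$ an index set, $s_i\in G$ (repetitions allowed), $f_i\in C(X)$, $f_i\ge0$, $f_i\ne0$, $\sum_if_i^2=1$ as a norm-convergent unordered sum; $P(G,C(X))$ is the set of these and $P_f(G,C(X))$ the subset with $I$ finite. *)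

theory Defs
  imports "HOL-Analysis.Analysis" "HOL-Algebra.Group"
begin

text \<open>Real-valued continuous functions on a compact space X (a type) are modelled by the
  bounded continuous functions (type bcontfun), carrying the sup norm.\<close>

setup_lifting type_definition_bcontfun

lift_definition cmul :: "('x::topological_space \<Rightarrow>\<^sub>C real) \<Rightarrow> ('x \<Rightarrow>\<^sub>C real) \<Rightarrow> ('x \<Rightarrow>\<^sub>C real)"
  is "\<lambda>f g x. f x * g x"
proof -
  fix f g :: "'x \<Rightarrow> real"
  assume f: "f \<in> bcontfun" and g: "g \<in> bcontfun"
  then obtain a b where a: "\<And>x. \<bar>f x\<bar> \<le> a" and b: "\<And>x. \<bar>g x\<bar> \<le> b"
    unfolding bcontfun_def bounded_iff by auto
  have "\<bar>f x * g x\<bar> \<le> a * b" for x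
    using a[of x] b[of x] by (simp add: abs_mult mult_mono')
  moreover have "continuous_on UNIV (\<lambda>x. f x * g x)"
    using f g unfolding bcontfun_def by (auto intro: continuous_intros)
  ultimately show "(\<lambda>x. f x * g x) \<in> bcontfun"
    unfolding bcontfun_def bounded_iff by auto
qed

definition cact :: "('g, 'b) monoid_scheme \<Rightarrow> ('g \<Rightarrow> 'x \<Rightarrow> 'x) \<Rightarrow> 'g
    \<Rightarrow> ('x::topological_space \<Rightarrow>\<^sub>C real) \<Rightarrow> ('x \<Rightarrow>\<^sub>C real)" where
  "cact G \<phi> s f = Bcontfun (\<lambda>x. apply_bcontfun f (\<phi> (inv\<^bsub>G\<^esub> s) x))"

text \<open>A formal sum \<open>\<Sum>_{i\<in>I} f_i s_i f_i\<close> is represented by the triple (I, s, f).\<close>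
type_synonym ('i, 'g, 'x) fsum = "'i set \<times> ('i \<Rightarrow> 'g) \<times> ('i \<Rightarrow> ('x \<Rightarrow>\<^sub>C real))"

definition gen_prob :: "('g, 'b) monoid_scheme \<Rightarrow> ('i, 'g, 'x::topological_space) fsum \<Rightarrow> bool" where
  "gen_prob G \<mu> = (case \<mu> of (I, s, f) \<Rightarrow>
      (\<forall>i\<in>I. s i \<in> carrier G) \<and>
      (\<forall>i\<in>I. \<forall>x. 0 \<le> apply_bcontfun (f i) x) \<and>
      (\<forall>i\<in>I. f i \<noteq> 0) \<and>
      ((\<lambda>i. cmul (f i) (f i)) has_sum const_bcontfun 1) I)"

definition gen_prob_fin :: "('g, 'b) monoid_scheme \<Rightarrow> ('i, 'g, 'x::topological_space) fsum \<Rightarrow> bool" where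
  "gen_prob_fin G \<mu> = (gen_prob G \<mu> \<and> finite (fst \<mu>))"

definition gp_mult :: "('g, 'b) monoid_scheme \<Rightarrow> ('g \<Rightarrow> 'x \<Rightarrow> 'x)
    \<Rightarrow> ('i, 'g, 'x::topological_space) fsum \<Rightarrow> ('j, 'g, 'x) fsum \<Rightarrow> ('i \<times> 'j, 'g, 'x) fsum" where
  "gp_mult G \<phi> \<mu> \<nu> = (case \<mu> of (I, s, f) \<Rightarrow> case \<nu> of (J, t, g) \<Rightarrow>
      ({(i, j) \<in> I \<times> J. cmul (f i) (cact G \<phi> (s i) (g j)) \<noteq> 0},
       (\<lambda>(i, j). s i \<otimes>\<^bsub>G\<^esub> t j),
       (\<lambda>(i, j). cmul (f i) (cact G \<phi> (s i) (g j)))))"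

definition fsum_eq :: "('i, 'g, 'x::topological_space) fsum \<Rightarrow> ('j, 'g, 'x) fsum \<Rightarrow> bool" where
  "fsum_eq \<mu> \<nu> = (case \<mu> of (I, s, f) \<Rightarrow> case \<nu> of (J, t, g) \<Rightarrow>
      (\<exists>h. bij_betw h I J \<and> (\<forall>i\<in>I. t (h i) = s i \<and> g (h i) = f i)))"

end

theory Submission
  imports Defs
begin

text \<open>For nonnegative families, unordered summation to 1 in the sup norm amounts to two
  uniform conditions: every finite partial sum is at most 1, and for each \<open>\<epsilon>\<close> some finite
  partial sum is at least \<open>1 - \<epsilon>\<close>. Both pass from \<open>\<Sum>f\<^sub>i\<^sup>2 = 1\<close> and \<open>\<Sum>g\<^sub>j\<^sup>2 = 1\<close> to the double
  family \<open>f\<^sub>i\<^sup>2 (s\<^sub>i\<cdot>g\<^sub>j)\<^sup>2\<close>, since translating by \<open>s\<^sub>i\<close> does not affect uniform estimates.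
  Associativity is the identity \<open>f\<^sub>i(s\<^sub>i\<cdot>g\<^sub>j)((s\<^sub>it\<^sub>j)\<cdot>h\<^sub>k) = f\<^sub>i(s\<^sub>i\<cdot>(g\<^sub>j(t\<^sub>j\<cdot>h\<^sub>k)))\<close> under
  the reindexing \<open>((i,j),k) \<mapsto> (i,(j,k))\<close>; the discarded zero terms correspond on both sides.\<close>

definition uniform_sum_one :: "'a set \<Rightarrow> ('a \<Rightarrow> 'x \<Rightarrow> real) \<Rightarrow> bool" where
  "uniform_sum_one A F \<longleftrightarrow>
     (\<forall>Y. finite Y \<and> Y \<subseteq> A \<longrightarrow> (\<forall>x. (\<Sum>a\<in>Y. F a x) \<le> 1)) \<and>
     (\<forall>e>0. \<exists>X. finite X \<and> X \<subseteq> A \<and> (\<forall>x. 1 - e \<le> (\<Sum>a\<in>X. F a x)))"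

lemma has_sum_metric_iff:
  fixes F :: "'a \<Rightarrow> 'b::{metric_space, comm_monoid_add}"
  shows "(F has_sum c) A \<longleftrightarrow> (\<forall>e>0. \<exists>X. finite X \<and> X \<subseteq> A \<and>
           (\<forall>Y. finite Y \<and> X \<subseteq> Y \<and> Y \<subseteq> A \<longrightarrow> dist (sum F Y) c < e))"
  unfolding has_sum_def tendsto_iff eventually_finite_subsets_at_top by simp

lemma sum_apply_bcontfun:
  fixes F :: "'a \<Rightarrow> ('x::topological_space \<Rightarrow>\<^sub>C real)"
  shows "apply_bcontfun (sum F Y) x = (\<Sum>a\<in>Y. apply_bcontfun (F a) x)"
  by (induction Y rule: infinite_finite_induct) auto

lemma dist_sum_const_one:
  fixes F :: "'a \<Rightarrow> ('x::topological_space \<Rightarrow>\<^sub>C real)"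
  shows "dist (apply_bcontfun (sum F Y) x) (apply_bcontfun (const_bcontfun 1) x)
           = \<bar>(\<Sum>a\<in>Y. apply_bcontfun (F a) x) - 1\<bar>"
  by (simp add: sum_apply_bcontfun dist_real_def)

lemma uniform_sum_one_le:
  "uniform_sum_one A F \<Longrightarrow> finite Y \<Longrightarrow> Y \<subseteq> A \<Longrightarrow> (\<Sum>a\<in>Y. F a x) \<le> 1"
  unfolding uniform_sum_one_def by blast

lemma uniform_sum_one_ge:
  "uniform_sum_one A F \<Longrightarrow> e > 0 \<Longrightarrow> \<exists>X. finite X \<and> X \<subseteq> A \<and> (\<forall>x. 1 - e \<le> (\<Sum>a\<in>X. F a x))"
  unfolding uniform_sum_one_def by blast

lemma uniform_sum_one_cong:
  assumes F: "uniform_sum_one A F" and eq: "\<And>a x. a \<in> A \<Longrightarrow> F a x = F' a x"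
  shows "uniform_sum_one A F'"
proof -
  have sum_eq: "(\<Sum>a\<in>Y. F a x) = (\<Sum>a\<in>Y. F' a x)" if "Y \<subseteq> A" for Y x
    using that eq by (intro sum.cong) auto
  have "(\<Sum>a\<in>Y. F' a x) \<le> 1" if "finite Y" "Y \<subseteq> A" for Y x
    using uniform_sum_one_le[OF F that] sum_eq[OF that(2)] by simp
  moreover have "\<exists>X. finite X \<and> X \<subseteq> A \<and> (\<forall>x. 1 - e \<le> (\<Sum>a\<in>X. F' a x))" if "e > 0" for e
  proof -
    obtain X where "finite X" "X \<subseteq> A" "\<And>x. 1 - e \<le> (\<Sum>a\<in>X. F a x)"
      using uniform_sum_one_ge[OF F \<open>e > 0\<close>] by meson
    moreover from \<open>X \<subseteq> A\<close> have "(\<Sum>a\<in>X. F a x) = (\<Sum>a\<in>X. F' a x)" for x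
      by (rule sum_eq)
    ultimately show ?thesis by auto
  qed
  ultimately show ?thesis
    unfolding uniform_sum_one_def by blast
qed

lemma uniform_sum_one_comp: "uniform_sum_one A F \<Longrightarrow> uniform_sum_one A (\<lambda>a x. F a (\<psi> x))"
  unfolding uniform_sum_one_def by meson

lemma has_sum_const_one_bcontfunD:
  fixes F :: "'a \<Rightarrow> ('x::topological_space \<Rightarrow>\<^sub>C real)"
  assumes "(F has_sum const_bcontfun 1) A" "e > 0"
  shows "\<exists>X. finite X \<and> X \<subseteq> A \<and>
    (\<forall>Y x. finite Y \<and> X \<subseteq> Y \<and> Y \<subseteq> A \<longrightarrow> \<bar>(\<Sum>a\<in>Y. F a x) - 1\<bar> < e)"
proof -
  obtain X where X: "finite X" "X \<subseteq> A"
    "\<And>Y. finite Y \<Longrightarrow> X \<subseteq> Y \<Longrightarrow> Y \<subseteq> A \<Longrightarrow> dist (sum F Y) (const_bcontfun 1) < e"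
    using assms(1)[unfolded has_sum_metric_iff, rule_format, OF assms(2)] by meson
  have "\<bar>(\<Sum>a\<in>Y. F a x) - 1\<bar> < e" if "finite Y" "X \<subseteq> Y" "Y \<subseteq> A" for Y x
    using dist_fun_lt_imp_dist_val_lt[OF X(3)[OF that]] by (simp only: dist_sum_const_one)
  then show ?thesis
    using X(1,2) by (intro exI[of _ X]) simp
qed

lemma has_sum_const_one_imp_uniform_sum_one:
  fixes F :: "'a \<Rightarrow> ('x::topological_space \<Rightarrow>\<^sub>C real)"
  assumes sum: "(F has_sum const_bcontfun 1) A" and nonneg: "\<And>a x. a \<in> A \<Longrightarrow> 0 \<le> F a x"
  shows "uniform_sum_one A (\<lambda>a x. F a x)"
proof -
  have "(\<Sum>a\<in>Y. F a x) \<le> 1" if Y: "finite Y" "Y \<subseteq> A" for Y x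
  proof (rule field_le_epsilon)
    fix e :: real assume "e > 0"
    then obtain X where X: "finite X" "X \<subseteq> A"
      "\<And>Y x. finite Y \<Longrightarrow> X \<subseteq> Y \<Longrightarrow> Y \<subseteq> A \<Longrightarrow> \<bar>(\<Sum>a\<in>Y. F a x) - 1\<bar> < e"
      using has_sum_const_one_bcontfunD[OF sum] by meson
    have "(\<Sum>a\<in>Y. F a x) \<le> (\<Sum>a\<in>Y \<union> X. F a x)"
      using X Y nonneg by (intro sum_mono2) auto
    also have "\<dots> < 1 + e"
      using X(3)[of "Y \<union> X" x] X(1,2) Y by (simp add: abs_less_iff)
    finally show "(\<Sum>a\<in>Y. F a x) \<le> 1 + e" by simp
  qed
  moreover have "\<exists>X. finite X \<and> X \<subseteq> A \<and> (\<forall>x. 1 - e \<le> (\<Sum>a\<in>X. F a x))" if "e > 0" for e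
  proof -
    obtain X where X: "finite X" "X \<subseteq> A"
      "\<And>Y x. finite Y \<Longrightarrow> X \<subseteq> Y \<Longrightarrow> Y \<subseteq> A \<Longrightarrow> \<bar>(\<Sum>a\<in>Y. F a x) - 1\<bar> < e"
      using has_sum_const_one_bcontfunD[OF sum \<open>e > 0\<close>] by meson
    have "1 - e \<le> (\<Sum>a\<in>X. F a x)" for x
      using X(3)[OF X(1) order_refl X(2), of x] by (simp add: abs_less_iff)
    with X(1,2) show ?thesis by blast
  qed
  ultimately show ?thesis
    unfolding uniform_sum_one_def by blast
qed

lemma uniform_sum_one_imp_has_sum_const_one:
  fixes F :: "'a \<Rightarrow> ('x::topological_space \<Rightarrow>\<^sub>C real)"
  assumes uni: "uniform_sum_one A (\<lambda>a x. F a x)" and nonneg: "\<And>a x. a \<in> A \<Longrightarrow> 0 \<le> F a x"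
  shows "(F has_sum const_bcontfun 1) A"
  unfolding has_sum_metric_iff
proof (intro allI impI)
  fix e :: real assume "e > 0"
  then have "e/2 > 0" by simp
  then obtain X where X: "finite X" "X \<subseteq> A" "\<And>x. 1 - e/2 \<le> (\<Sum>a\<in>X. F a x)"
    using uniform_sum_one_ge[OF uni] by meson
  have half: "dist (sum F Y) (const_bcontfun 1) \<le> e/2" if Y: "finite Y" "X \<subseteq> Y" "Y \<subseteq> A" for Y
  proof (rule dist_bound)
    fix x
    have "(\<Sum>a\<in>X. F a x) \<le> (\<Sum>a\<in>Y. F a x)"
      using X Y nonneg by (intro sum_mono2) auto
    moreover have "(\<Sum>a\<in>Y. F a x) \<le> 1"
      using uni Y(1,3) by (rule uniform_sum_one_le)
    ultimately show "dist (apply_bcontfun (sum F Y) x) (apply_bcontfun (const_bcontfun 1) x) \<le> e/2"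
      unfolding dist_sum_const_one using X(3)[of x] by linarith
  qed
  have "dist (sum F Y) (const_bcontfun 1) < e" if "finite Y" "X \<subseteq> Y" "Y \<subseteq> A" for Y
    using half[OF that] \<open>e > 0\<close> by linarith
  with X(1,2) show "\<exists>X. finite X \<and> X \<subseteq> A \<and>
      (\<forall>Y. finite Y \<and> X \<subseteq> Y \<and> Y \<subseteq> A \<longrightarrow> dist (sum F Y) (const_bcontfun 1) < e)"
    by blast
qed

lemma uniform_sum_one_Sigma_le:
  fixes F :: "'i \<Rightarrow> 'x \<Rightarrow> real" and G :: "'i \<Rightarrow> 'j \<Rightarrow> 'x \<Rightarrow> real"
  assumes F: "uniform_sum_one I F" and F0: "\<And>i x. i \<in> I \<Longrightarrow> 0 \<le> F i x"
    and G: "\<And>i. i \<in> I \<Longrightarrow> uniform_sum_one J (G i)"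
    and G0: "\<And>i j x. i \<in> I \<Longrightarrow> j \<in> J \<Longrightarrow> 0 \<le> G i j x"
    and Z: "finite Z" "Z \<subseteq> I \<times> J"
  shows "(\<Sum>(i, j)\<in>Z. F i x * G i j x) \<le> 1"
proof -
  have "(\<Sum>(i, j)\<in>Z. F i x * G i j x) \<le> (\<Sum>(i, j)\<in>fst ` Z \<times> snd ` Z. F i x * G i j x)"
  proof (rule sum_mono2)
    show "finite (fst ` Z \<times> snd ` Z)" "Z \<subseteq> fst ` Z \<times> snd ` Z"
      using Z(1) by force+
    show "0 \<le> (case p of (i, j) \<Rightarrow> F i x * G i j x)" if p: "p \<in> fst ` Z \<times> snd ` Z - Z" for p
    proof -
      have "fst p \<in> I" "snd p \<in> J"
        using p Z(2) by auto
      then show ?thesis using F0 G0 by (simp add: case_prod_beta')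
    qed
  qed
  also have "\<dots> = (\<Sum>i\<in>fst ` Z. F i x * (\<Sum>j\<in>snd ` Z. G i j x))"
    by (simp add: sum.cartesian_product sum_distrib_left)
  also have "\<dots> \<le> (\<Sum>i\<in>fst ` Z. F i x)"
    using Z F0 by (intro sum_mono mult_left_le uniform_sum_one_le[OF G]) auto
  also have "\<dots> \<le> 1"
    using Z by (intro uniform_sum_one_le[OF F]) auto
  finally show ?thesis .
qed

lemma uniform_sum_one_Sigma:
  fixes F :: "'i \<Rightarrow> 'x \<Rightarrow> real" and G :: "'i \<Rightarrow> 'j \<Rightarrow> 'x \<Rightarrow> real"
  assumes F: "uniform_sum_one I F" and F0: "\<And>i x. i \<in> I \<Longrightarrow> 0 \<le> F i x"
    and G: "\<And>i. i \<in> I \<Longrightarrow> uniform_sum_one J (G i)"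
    and G0: "\<And>i j x. i \<in> I \<Longrightarrow> j \<in> J \<Longrightarrow> 0 \<le> G i j x"
  shows "uniform_sum_one (I \<times> J) (\<lambda>(i, j) x. F i x * G i j x)"
proof -
  have "\<exists>Z. finite Z \<and> Z \<subseteq> I \<times> J \<and> (\<forall>x. 1 - e \<le> (\<Sum>(i, j)\<in>Z. F i x * G i j x))"
    if "e > 0" for e
  proof -
    have "e/2 > 0" using \<open>e > 0\<close> by simp
    then obtain X where X: "finite X" "X \<subseteq> I" "\<And>x. 1 - e/2 \<le> (\<Sum>i\<in>X. F i x)"
      using uniform_sum_one_ge[OF F] by meson
    have "\<forall>i\<in>X. \<exists>Y. finite Y \<and> Y \<subseteq> J \<and> (\<forall>x. 1 - e/2 \<le> (\<Sum>j\<in>Y. G i j x))"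
    proof
      fix i assume "i \<in> X"
      with X(2) have "uniform_sum_one J (G i)" by (intro G) auto
      then show "\<exists>Y. finite Y \<and> Y \<subseteq> J \<and> (\<forall>x. 1 - e/2 \<le> (\<Sum>j\<in>Y. G i j x))"
        using \<open>e/2 > 0\<close> by (rule uniform_sum_one_ge)
    qed
    then obtain Y where Y: "\<And>i. i \<in> X \<Longrightarrow> finite (Y i) \<and> Y i \<subseteq> J \<and> (\<forall>x. 1 - e/2 \<le> (\<Sum>j\<in>Y i. G i j x))"
      by metis
    have "1 - e \<le> (\<Sum>(i, j)\<in>Sigma X Y. F i x * G i j x)" for x
    proof -
      have "e/2 * (\<Sum>i\<in>X. F i x) \<le> e/2"
        using uniform_sum_one_le[OF F X(1,2)] \<open>e > 0\<close> by (intro mult_left_le) auto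
      then have "1 - e \<le> (\<Sum>i\<in>X. F i x) - e/2 * (\<Sum>i\<in>X. F i x)"
        using X(3)[of x] by linarith
      also have "\<dots> = (\<Sum>i\<in>X. F i x * (1 - e/2))"
        by (simp add: sum_distrib_left sum_distrib_right algebra_simps sum_subtractf)
      also have "\<dots> \<le> (\<Sum>i\<in>X. F i x * (\<Sum>j\<in>Y i. G i j x))"
        using X(2) Y F0 by (intro sum_mono mult_left_mono) auto
      also have "\<dots> = (\<Sum>(i, j)\<in>Sigma X Y. F i x * G i j x)"
        using X(1) Y by (simp add: sum.Sigma sum_distrib_left)
      finally show ?thesis .
    qed
    moreover have "finite (Sigma X Y)" "Sigma X Y \<subseteq> I \<times> J"
      using X Y by auto
    ultimately show ?thesis by blast
  qed
  moreover have "(\<Sum>(i, j)\<in>Z. F i x * G i j x) \<le> 1" if "finite Z" "Z \<subseteq> I \<times> J" for Z x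
    using F F0 G G0 that by (rule uniform_sum_one_Sigma_le)
  ultimately show ?thesis
    unfolding uniform_sum_one_def by (simp add: case_prod_beta')
qed

lemma cmul_apply [simp]: "apply_bcontfun (cmul f g) x = apply_bcontfun f x * apply_bcontfun g x"
  by (simp add: cmul.rep_eq)

lemma cmul_zero_left [simp]: "cmul 0 g = 0"
  by (rule bcontfun_eqI) simp

lemma cmul_zero_right [simp]: "cmul f 0 = 0"
  by (rule bcontfun_eqI) simp

lemma cmul_assoc: "cmul (cmul f g) h = cmul f (cmul g h)"
  by (rule bcontfun_eqI) simp

lemma fsum_eq_nonzero_reindex:
  assumes "bij_betw r A B" "\<And>a. a \<in> A \<Longrightarrow> F (r a) = E a \<and> \<tau> (r a) = \<sigma> a"
  shows "fsum_eq ({a \<in> A. E a \<noteq> 0}, \<sigma>, E) ({b \<in> B. F b \<noteq> 0}, \<tau>, F)"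
  unfolding fsum_eq_def using assms by (auto intro!: exI[of _ r] bij_betw_Collect)

lemma finite_gp_mult_index:
  "finite I \<Longrightarrow> finite J \<Longrightarrow> finite (fst (gp_mult G \<phi> (I, s, f) (J, t, g)))"
  unfolding gp_mult_def by (auto intro: finite_subset[of _ "I \<times> J"])

locale continuous_group_action = group G
  for G :: "('g, 'b) monoid_scheme" (structure) and \<phi> :: "'g \<Rightarrow> 'x::topological_space \<Rightarrow> 'x" +
  assumes continuous_action: "g \<in> carrier G \<Longrightarrow> continuous_on UNIV (\<phi> g)"
    and action_mult: "g \<in> carrier G \<Longrightarrow> h \<in> carrier G \<Longrightarrow> \<phi> (g \<otimes> h) x = \<phi> g (\<phi> h x)"
begin

lemma cact_apply [simp]:
  assumes "a \<in> carrier G"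
  shows "apply_bcontfun (cact G \<phi> a f) x = apply_bcontfun f (\<phi> (inv a) x)"
proof -
  have "continuous_on UNIV (\<phi> (inv a))"
    using assms by (intro continuous_action) simp
  then have "(\<lambda>x. apply_bcontfun f (\<phi> (inv a) x)) \<in> bcontfun"
    unfolding bcontfun_def
    by (auto intro: continuous_on_compose2[OF continuous_on_apply_bcontfun]
        bounded_subset[OF bounded_apply_bcontfun])
  then show ?thesis
    unfolding cact_def by (simp add: Bcontfun_inverse)
qed

lemma cact_zero [simp]: "a \<in> carrier G \<Longrightarrow> cact G \<phi> a 0 = 0"
  by (rule bcontfun_eqI) simp

lemma cact_cmul: "a \<in> carrier G \<Longrightarrow> cact G \<phi> a (cmul f g) = cmul (cact G \<phi> a f) (cact G \<phi> a g)"
  by (rule bcontfun_eqI) simp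

lemma cact_cact:
  assumes "a \<in> carrier G" "b \<in> carrier G"
  shows "cact G \<phi> a (cact G \<phi> b f) = cact G \<phi> (a \<otimes> b) f"
  by (rule bcontfun_eqI) (simp add: assms inv_mult_group action_mult)

lemma gp_mult_square_has_sum:
  assumes \<mu>: "gen_prob G (I, s, f)" and \<nu>: "gen_prob G (J, t, g)"
  shows "((\<lambda>(i, j). cmul (cmul (f i) (cact G \<phi> (s i) (g j))) (cmul (f i) (cact G \<phi> (s i) (g j))))
           has_sum const_bcontfun 1) (I \<times> J)"
proof -
  have s: "\<And>i. i \<in> I \<Longrightarrow> s i \<in> carrier G"
    using \<mu> unfolding gen_prob_def by simp
  have f: "uniform_sum_one I (\<lambda>i x. f i x * f i x)"
    using \<mu> has_sum_const_one_imp_uniform_sum_one[of "\<lambda>i. cmul (f i) (f i)" I]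
    unfolding gen_prob_def by simp
  have g: "uniform_sum_one J (\<lambda>j x. g j x * g j x)"
    using \<nu> has_sum_const_one_imp_uniform_sum_one[of "\<lambda>j. cmul (g j) (g j)" J]
    unfolding gen_prob_def by simp
  have "uniform_sum_one (I \<times> J)
      (\<lambda>(i, j) x. f i x * f i x * (g j (\<phi> (inv (s i)) x) * g j (\<phi> (inv (s i)) x)))"
    by (rule uniform_sum_one_Sigma[OF f _ uniform_sum_one_comp[OF g]]) simp_all
  then have "uniform_sum_one (I \<times> J) (\<lambda>p x. apply_bcontfun ((\<lambda>(i, j).
      cmul (cmul (f i) (cact G \<phi> (s i) (g j))) (cmul (f i) (cact G \<phi> (s i) (g j)))) p) x)"
    by (rule uniform_sum_one_cong) (auto simp: s)
  then show ?thesis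
    by (rule uniform_sum_one_imp_has_sum_const_one) (simp add: split_beta)
qed

lemma gen_prob_gp_mult:
  assumes \<mu>: "gen_prob G (I, s, f)" and \<nu>: "gen_prob G (J, t, g)"
  shows "gen_prob G (gp_mult G \<phi> (I, s, f) (J, t, g))"
proof -
  define k where "k = (\<lambda>(i, j). cmul (f i) (cact G \<phi> (s i) (g j)))"
  have s: "\<And>i. i \<in> I \<Longrightarrow> s i \<in> carrier G" and f: "\<And>i x. i \<in> I \<Longrightarrow> 0 \<le> f i x"
    using \<mu> unfolding gen_prob_def by simp_all
  have t: "\<And>j. j \<in> J \<Longrightarrow> t j \<in> carrier G" and g: "\<And>j x. j \<in> J \<Longrightarrow> 0 \<le> g j x"
    using \<nu> unfolding gen_prob_def by simp_all
  have mult: "gp_mult G \<phi> (I, s, f) (J, t, g) = ({p \<in> I \<times> J. k p \<noteq> 0}, \<lambda>(i, j). s i \<otimes> t j, k)"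
    unfolding gp_mult_def k_def by auto
  have "((\<lambda>p. cmul (k p) (k p)) has_sum const_bcontfun 1) {p \<in> I \<times> J. k p \<noteq> 0}"
    using gp_mult_square_has_sum[OF \<mu> \<nu>]
    by (subst has_sum_cong_neutral[where T = "I \<times> J"]) (auto simp: k_def)
  moreover have "0 \<le> k p x" if "p \<in> I \<times> J" for p x
    using that s f g by (auto simp: k_def)
  ultimately show ?thesis
    unfolding mult gen_prob_def using s t by auto
qed

lemma gp_mult_assoc:
  assumes s: "\<forall>i\<in>I. s i \<in> carrier G" and t: "\<forall>j\<in>J. t j \<in> carrier G"
    and u: "\<forall>k\<in>K. u k \<in> carrier G"
  shows "fsum_eq (gp_mult G \<phi> (gp_mult G \<phi> (I, s, f) (J, t, g)) (K, u, h))
                 (gp_mult G \<phi> (I, s, f) (gp_mult G \<phi> (J, t, g) (K, u, h)))"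
proof -
  define L where "L = (\<lambda>((i, j), k). cmul (cmul (f i) (cact G \<phi> (s i) (g j))) (cact G \<phi> (s i \<otimes> t j) (h k)))"
  define R where "R = (\<lambda>(i, j, k). cmul (f i) (cact G \<phi> (s i) (cmul (g j) (cact G \<phi> (t j) (h k)))))"
  have left: "gp_mult G \<phi> (gp_mult G \<phi> (I, s, f) (J, t, g)) (K, u, h)
      = ({p \<in> (I \<times> J) \<times> K. L p \<noteq> 0}, \<lambda>((i, j), k). (s i \<otimes> t j) \<otimes> u k, L)"
    unfolding gp_mult_def L_def by auto
  have right: "gp_mult G \<phi> (I, s, f) (gp_mult G \<phi> (J, t, g) (K, u, h))
      = ({p \<in> I \<times> J \<times> K. R p \<noteq> 0}, \<lambda>(i, j, k). s i \<otimes> (t j \<otimes> u k), R)"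
    using s t unfolding gp_mult_def R_def by auto
  have bij: "bij_betw (\<lambda>((i, j), k). (i, j, k)) ((I \<times> J) \<times> K) (I \<times> J \<times> K)"
    by (rule bij_betw_byWitness[where f' = "\<lambda>(i, j, k). ((i, j), k)"]) auto
  show ?thesis
    unfolding left right
    by (rule fsum_eq_nonzero_reindex[OF bij])
      (use s t u in \<open>auto simp: L_def R_def cact_cmul cact_cact cmul_assoc m_assoc\<close>)
qed

end

theorem mainTheorem8:
  fixes G :: "('g, 'b) monoid_scheme"
    and \<phi> :: "'g \<Rightarrow> 'x::t2_space \<Rightarrow> 'x"
  assumes grp: "group G"
    and cnt: "countable (carrier G)"
    and cpt: "compact (UNIV :: 'x set)"
    and homeo: "\<And>g. g \<in> carrier G \<Longrightarrow> homeomorphism UNIV UNIV (\<phi> g) (\<phi> (inv\<^bsub>G\<^esub> g))"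
    and act_one: "\<And>x. \<phi> \<one>\<^bsub>G\<^esub> x = x"
    and act_mult: "\<And>g h x. g \<in> carrier G \<Longrightarrow> h \<in> carrier G \<Longrightarrow>
                     \<phi> (g \<otimes>\<^bsub>G\<^esub> h) x = \<phi> g (\<phi> h x)"
  shows
    "(\<forall>(I :: 'i set) s f (J :: 'j set) t g.
        gen_prob G (I, s, f) \<longrightarrow> gen_prob G (J, t, g) \<longrightarrow>
          ((\<lambda>(i, j). cmul (cmul (f i) (cact G \<phi> (s i) (g j))) (cmul (f i) (cact G \<phi> (s i) (g j))))
             has_sum const_bcontfun 1) (I \<times> J)
          \<and> gen_prob G (gp_mult G \<phi> (I, s, f) (J, t, g)))
     \<and> (\<forall>(\<mu> :: ('i, 'g, 'x) fsum) (\<nu> :: ('j, 'g, 'x) fsum) (\<rho> :: ('k, 'g, 'x) fsum).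
          gen_prob G \<mu> \<longrightarrow> gen_prob G \<nu> \<longrightarrow> gen_prob G \<rho> \<longrightarrow>
          fsum_eq (gp_mult G \<phi> (gp_mult G \<phi> \<mu> \<nu>) \<rho>) (gp_mult G \<phi> \<mu> (gp_mult G \<phi> \<nu> \<rho>)))
     \<and> (\<forall>(\<mu> :: ('i, 'g, 'x) fsum) (\<nu> :: ('j, 'g, 'x) fsum).
          gen_prob_fin G \<mu> \<longrightarrow> gen_prob_fin G \<nu> \<longrightarrow> gen_prob_fin G (gp_mult G \<phi> \<mu> \<nu>))"
proof -
  interpret continuous_group_action G \<phi>
    using homeo act_mult
    by (intro continuous_group_action.intro continuous_group_action_axioms.intro grp)
      (auto simp: homeomorphism_def)
  show ?thesis
  proof (intro conjI allI impI)
    fix I :: "'i set" and s :: "'i \<Rightarrow> 'g" and f :: "'i \<Rightarrow> ('x \<Rightarrow>\<^sub>C real)"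
      and J :: "'j set" and t :: "'j \<Rightarrow> 'g" and g :: "'j \<Rightarrow> ('x \<Rightarrow>\<^sub>C real)"
    assume "gen_prob G (I, s, f)" "gen_prob G (J, t, g)"
    then show "((\<lambda>(i, j). cmul (cmul (f i) (cact G \<phi> (s i) (g j))) (cmul (f i) (cact G \<phi> (s i) (g j))))
        has_sum const_bcontfun 1) (I \<times> J)"
      and "gen_prob G (gp_mult G \<phi> (I, s, f) (J, t, g))"
      by (rule gp_mult_square_has_sum gen_prob_gp_mult)+
  next
    fix \<mu> :: "('i, 'g, 'x) fsum" and \<nu> :: "('j, 'g, 'x) fsum" and \<rho> :: "('k, 'g, 'x) fsum"
    assume "gen_prob G \<mu>" "gen_prob G \<nu>" "gen_prob G \<rho>"
    then show "fsum_eq (gp_mult G \<phi> (gp_mult G \<phi> \<mu> \<nu>) \<rho>) (gp_mult G \<phi> \<mu> (gp_mult G \<phi> \<nu> \<rho>))"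
      by (cases \<mu>; cases \<nu>; cases \<rho>) (simp add: gen_prob_def gp_mult_assoc)
  next
    fix \<mu> :: "('i, 'g, 'x) fsum" and \<nu> :: "('j, 'g, 'x) fsum"
    assume "gen_prob_fin G \<mu>" "gen_prob_fin G \<nu>"
    then show "gen_prob_fin G (gp_mult G \<phi> \<mu> \<nu>)"
      by (cases \<mu>; cases \<nu>) (simp add: gen_prob_fin_def gen_prob_gp_mult finite_gp_mult_index)
  qed
qed

end
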